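(* In a game with incomplete information as described in the context, let $f$ be a pure strategy profile ($f_i$ $\mathcal T_i$-measurable for each $i$) and $g$ a mixed strategy profile with each $g_i:T_i\to\mathcal M(A_i)$ being $\mathcal F_i$-measurable. If $f$ and $g$ are universally distribution equivalent, then $f$ is belief consistent with $g$, i.e. for every $i\in I$, $f_i(t_i)\in\operatorname{supp} g_i(t_i)$ for $\lambda_i$-almost all $t_i\in T_i$.
   Context: Players $I=\{1,\dots,n\}$; each $A_i$ is a compact metric space with Borel $\sigma$-algebra $\mathcal B(A_i)$; each $(T_i,\mathcal T_i,\lambda_i)$ is an atomless probability space with $\lambda_i$ complete and countably additive; $\mathcal F_i\subseteq\mathcal T_i$ is a countably generated sub-$\sigma$-algebra. $\mathcal M(A_i)$ denotes the space of Borel probability measures on $A_i$ with the topology of weak convergence, and $\operatorname{supp}\mu$ the support of $\mu\in\mathcal M(A_i)$. A mixed strategy of $i$ is a measurable map $g_i:T_i\to\mathcal M(A_i)$ (write $g_i(t_i,\cdot)$ for the measure); a pure strategy is a measurable map $f_i:T_i\to A_i$, identified with $t_i\mapsto\delta_{f_i(t_i)}$. Strategy profiles $f,g$ are universally distribution equivalent if for every $i\in I$ and every $E\in\mathcal F_i$, $\int_E f_i(t_i,\cdot)\,\mathrm d\lambda_i(t_i)=\int_E g_i(t_i,\cdot)\,\mathrm d\lambda_i(t_i)$ as measures on $A_i$; for a pure $f_i$ this means $\lambda_i(E\cap f_i^{-1}(B))=\int_E g_i(t_i,B)\,\mathrm d\lambda_i(t_i)$ for all Borel $B\subseteq A_i$.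 *)

theory Defs
  imports "HOL-Probability.Probability"
begin

definition borel_on :: "'a::metric_space set \<Rightarrow> 'a measure" where
  "borel_on A = restrict_space borel A"

definition supp :: "'a::metric_space set \<Rightarrow> 'a measure \<Rightarrow> 'a set" where
  "supp A \<mu> = {x \<in> A. \<forall>U. open U \<longrightarrow> x \<in> U \<longrightarrow> emeasure \<mu> (U \<inter> A) > 0}"

definition atomless :: "'b measure \<Rightarrow> bool" where
  "atomless M \<longleftrightarrow> (\<forall>E\<in>sets M. emeasure M E > 0 \<longrightarrow>
      (\<exists>E'\<in>sets M. E' \<subseteq> E \<and> 0 < emeasure M E' \<and> emeasure M E' < emeasure M E))"

definition sub_sigma_algebra :: "'b measure \<Rightarrow> 'b measure \<Rightarrow> bool" where
  "sub_sigma_algebra F M \<longleftrightarrow> space F = space M \<and> sets F \<subseteq> sets M"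

definition countably_generated :: "'b measure \<Rightarrow> bool" where
  "countably_generated F \<longleftrightarrow>
     (\<exists>C. countable C \<and> C \<subseteq> Pow (space F) \<and> sets F = sigma_sets (space F) C)"

definition pure_as_mixed :: "'a::metric_space set \<Rightarrow> ('b \<Rightarrow> 'a) \<Rightarrow> 'b \<Rightarrow> 'a measure" where
  "pure_as_mixed A f = (\<lambda>t. return (borel_on A) (f t))"

definition univ_dist_equiv ::
  "nat set \<Rightarrow> (nat \<Rightarrow> 'a::metric_space set) \<Rightarrow> (nat \<Rightarrow> 'b measure) \<Rightarrow> (nat \<Rightarrow> 'b measure)
   \<Rightarrow> (nat \<Rightarrow> 'b \<Rightarrow> 'a measure) \<Rightarrow> (nat \<Rightarrow> 'b \<Rightarrow> 'a measure) \<Rightarrow> bool" where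
  "univ_dist_equiv I A lam F f g \<longleftrightarrow>
     (\<forall>i\<in>I. \<forall>E\<in>sets (F i). \<forall>B\<in>sets (borel_on (A i)).
        (\<integral>\<^sup>+ t\<in>E. emeasure (f i t) B \<partial>lam i) = (\<integral>\<^sup>+ t\<in>E. emeasure (g i t) B \<partial>lam i))"

end

theory Submission
  imports Defs
begin

text \<open>Cover the compact action set by countably many balls of radii 1/(m+1). For each such
  ball B, the set of types t with f t \<in> B but g t (B) = 0 is null: on the F-measurable set
  where g t (B) = 0, distribution equivalence makes the pure strategy hit B with total
  probability 0. Off the countable union of these null sets, every ball around f t of the
  cover has positive g t-measure, and these balls form a local base at every point of A.\<close>

lemma compact_countable_local_base:
  fixes A :: "'a::metric_space set"
  assumes "compact A"
  obtains \<B> where "countable \<B>" and "\<And>B. B \<in> \<B> \<Longrightarrow> open B"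
    and "\<And>x U. x \<in> A \<Longrightarrow> open U \<Longrightarrow> x \<in> U \<Longrightarrow> \<exists>B\<in>\<B>. x \<in> B \<and> B \<subseteq> U"
proof -
  have "\<forall>m::nat. \<exists>k. finite k \<and> k \<subseteq> A \<and> A \<subseteq> (\<Union>c\<in>k. ball c (1 / Suc m))"
    using seq_compact_imp_totally_bounded[OF compact_imp_seq_compact[OF assms]] by simp
  then obtain K where K: "\<And>m. finite (K m) \<and> K m \<subseteq> A \<and> A \<subseteq> (\<Union>c\<in>K m. ball c (1 / Suc m))"
    by metis
  define \<B> where "\<B> = (\<Union>m. (\<lambda>c. ball c (1 / Suc m)) ` K m)"
  have "\<exists>B\<in>\<B>. x \<in> B \<and> B \<subseteq> U" if x: "x \<in> A" and U: "open U" "x \<in> U" for x U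
  proof -
    obtain e where e: "e > 0" "ball x e \<subseteq> U"
      using U open_contains_ball by blast
    obtain m :: nat where m: "1 / Suc m < e / 2"
      using e by (metis divide_inverse half_gt_zero mult_1 reals_Archimedean)
    obtain c where c: "c \<in> K m" "x \<in> ball c (1 / Suc m)"
      using K[of m] x by blast
    have "ball c (1 / Suc m) \<subseteq> ball x e"
    proof
      fix y assume "y \<in> ball c (1 / Suc m)"
      then have "dist x y < e"
        using c m dist_triangle[of x y c] by (simp add: dist_commute)
      then show "y \<in> ball x e" by simp
    qed
    then show ?thesis
      using c e unfolding \<B>_def by blast
  qed
  moreover have "countable \<B>"
    unfolding \<B>_def using K by (intro countable_UN) (auto intro!: countable_finite)
  moreover have "open B" if "B \<in> \<B>" for B
    using that by (auto simp: \<B>_def)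
  ultimately show ?thesis
    using that by blast
qed

lemma in_supp_if_local_base_positive:
  fixes \<mu> :: "'a::metric_space measure"
  assumes sets_\<mu>: "sets \<mu> = sets (borel_on A)" and "x \<in> A"
    and base: "\<And>U. open U \<Longrightarrow> x \<in> U \<Longrightarrow> \<exists>B\<in>\<B>. x \<in> B \<and> B \<subseteq> U"
    and pos: "\<And>B. B \<in> \<B> \<Longrightarrow> x \<in> B \<Longrightarrow> 0 < emeasure \<mu> (B \<inter> A)"
  shows "x \<in> supp A \<mu>"
  unfolding supp_def
proof (safe intro!: \<open>x \<in> A\<close>)
  fix U assume U: "open U" "x \<in> U"
  then obtain B where B: "B \<in> \<B>" "x \<in> B" "B \<subseteq> U"
    using base by blast
  have "U \<inter> A \<in> sets \<mu>"
    using U(1) by (auto simp: sets_\<mu> borel_on_def sets_restrict_space)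
  then have "emeasure \<mu> (B \<inter> A) \<le> emeasure \<mu> (U \<inter> A)"
    using B(3) by (intro emeasure_mono) auto
  then show "0 < emeasure \<mu> (U \<inter> A)"
    using pos[OF B(1,2)] by order
qed

lemma AE_pure_in_imp_mixed_positive:
  assumes F_sub: "sub_sigma_algebra F lam"
    and f: "f \<in> lam \<rightarrow>\<^sub>M M"
    and g: "g \<in> F \<rightarrow>\<^sub>M subprob_algebra M"
    and B: "B \<in> sets M"
    and equiv: "\<And>E. E \<in> sets F \<Longrightarrow>
      (\<integral>\<^sup>+ t\<in>E. emeasure (return M (f t)) B \<partial>lam) = (\<integral>\<^sup>+ t\<in>E. emeasure (g t) B \<partial>lam)"
  shows "AE t in lam. f t \<in> B \<longrightarrow> 0 < emeasure (g t) B"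
proof (rule AE_I')
  have space_F: "space F = space lam" and sets_F: "sets F \<subseteq> sets lam"
    using F_sub by (auto simp: sub_sigma_algebra_def)
  define E where "E = {t \<in> space F. emeasure (g t) B = 0}"
  define N where "N = E \<inter> {t \<in> space lam. f t \<in> B}"
  have "(\<lambda>t. emeasure (g t) B) \<in> borel_measurable F"
    using measurable_emeasure_subprob_algebra[OF B] g by measurable
  then have E: "E \<in> sets F"
    unfolding E_def by measurable
  have "{t \<in> space lam. f t \<in> B} \<in> sets lam"
    using measurable_sets[OF f B] by (simp add: vimage_def Int_def conj_commute)
  with E sets_F have N: "N \<in> sets lam"
    unfolding N_def by auto
  have "emeasure lam N = (\<integral>\<^sup>+ t. indicator N t \<partial>lam)"
    using N by simp
  also have "\<dots> = (\<integral>\<^sup>+ t\<in>E. emeasure (return M (f t)) B \<partial>lam)"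
    by (rule nn_integral_cong) (auto simp: B N_def indicator_def)
  also have "\<dots> = (\<integral>\<^sup>+ t\<in>E. emeasure (g t) B \<partial>lam)"
    using equiv[OF E] .
  also have "\<dots> = 0"
    by (auto intro!: nn_integral_zero' AE_I2 simp: E_def indicator_def)
  finally show "N \<in> null_sets lam"
    using N by auto
  show "{t \<in> space lam. \<not> (f t \<in> B \<longrightarrow> 0 < emeasure (g t) B)} \<subseteq> N"
    using space_F by (auto simp: N_def E_def)
qed

lemma AE_in_supp_if_distribution_equivalent:
  fixes A :: "'a::metric_space set"
  assumes "compact A"
    and F_sub: "sub_sigma_algebra F lam"
    and f: "f \<in> lam \<rightarrow>\<^sub>M borel_on A"
    and g: "g \<in> F \<rightarrow>\<^sub>M prob_algebra (borel_on A)"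
    and equiv: "\<And>E B. E \<in> sets F \<Longrightarrow> B \<in> sets (borel_on A) \<Longrightarrow>
      (\<integral>\<^sup>+ t\<in>E. emeasure (return (borel_on A) (f t)) B \<partial>lam) = (\<integral>\<^sup>+ t\<in>E. emeasure (g t) B \<partial>lam)"
  shows "AE t in lam. f t \<in> supp A (g t)"
proof -
  obtain \<B> where "countable \<B>" and open_\<B>: "\<And>B. B \<in> \<B> \<Longrightarrow> open B"
    and base: "\<And>x U. x \<in> A \<Longrightarrow> open U \<Longrightarrow> x \<in> U \<Longrightarrow> \<exists>B\<in>\<B>. x \<in> B \<and> B \<subseteq> U"
    using compact_countable_local_base[OF \<open>compact A\<close>] by blast
  have space_F: "space F = space lam"
    using F_sub by (simp add: sub_sigma_algebra_def)
  have g_sub: "g \<in> F \<rightarrow>\<^sub>M subprob_algebra (borel_on A)"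
    using g by (rule measurable_prob_algebraD)
  have sets_B: "B \<inter> A \<in> sets (borel_on A)" if "B \<in> \<B>" for B
    using open_\<B>[OF that] by (auto simp: borel_on_def sets_restrict_space)
  have "AE t in lam. f t \<in> B \<inter> A \<longrightarrow> 0 < emeasure (g t) (B \<inter> A)" if "B \<in> \<B>" for B
    using AE_pure_in_imp_mixed_positive[OF F_sub f g_sub sets_B[OF that]] equiv sets_B[OF that]
    by blast
  then have "AE t in lam. \<forall>B\<in>\<B>. f t \<in> B \<inter> A \<longrightarrow> 0 < emeasure (g t) (B \<inter> A)"
    using \<open>countable \<B>\<close> by (subst AE_ball_countable) auto
  then show ?thesis
  proof (elim AE_mp, intro AE_I2 impI)
    fix t assume t: "t \<in> space lam"
      and pos: "\<forall>B\<in>\<B>. f t \<in> B \<inter> A \<longrightarrow> 0 < emeasure (g t) (B \<inter> A)"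
    have "f t \<in> A"
      using measurable_space[OF f t] by (simp add: borel_on_def space_restrict_space)
    moreover have "sets (g t) = sets (borel_on A)"
      using measurable_space[OF g] t space_F by (auto simp: space_prob_algebra)
    ultimately show "f t \<in> supp A (g t)"
      using pos base by (intro in_supp_if_local_base_positive[where \<B> = \<B>]) auto
  qed
qed

theorem proposition3:
  fixes n :: nat
    and A :: "nat \<Rightarrow> 'a::metric_space set"
    and lam :: "nat \<Rightarrow> 'b measure"
    and F :: "nat \<Rightarrow> 'b measure"
    and f :: "nat \<Rightarrow> 'b \<Rightarrow> 'a"
    and g :: "nat \<Rightarrow> 'b \<Rightarrow> 'a measure"
  assumes A_compact: "\<And>i. i \<in> {1..n} \<Longrightarrow> compact (A i)"
    and lam_prob: "\<And>i. i \<in> {1..n} \<Longrightarrow> prob_space (lam i)"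
    and lam_complete: "\<And>i. i \<in> {1..n} \<Longrightarrow> complete_measure (lam i)"
    and lam_atomless: "\<And>i. i \<in> {1..n} \<Longrightarrow> atomless (lam i)"
    and F_sub: "\<And>i. i \<in> {1..n} \<Longrightarrow> sub_sigma_algebra (F i) (lam i)"
    and F_cg: "\<And>i. i \<in> {1..n} \<Longrightarrow> countably_generated (F i)"
    and f_meas: "\<And>i. i \<in> {1..n} \<Longrightarrow> f i \<in> lam i \<rightarrow>\<^sub>M borel_on (A i)"
    and g_meas: "\<And>i. i \<in> {1..n} \<Longrightarrow> g i \<in> F i \<rightarrow>\<^sub>M prob_algebra (borel_on (A i))"
    and ude: "univ_dist_equiv {1..n} A lam F (\<lambda>i. pure_as_mixed (A i) (f i)) g"
  shows "\<forall>i\<in>{1..n}. AE t in lam i. f i t \<in> supp (A i) (g i t)"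
proof
  fix i assume i: "i \<in> {1..n}"
  show "AE t in lam i. f i t \<in> supp (A i) (g i t)"
  proof (rule AE_in_supp_if_distribution_equivalent[OF A_compact F_sub f_meas g_meas])
    show "\<And>E B. E \<in> sets (F i) \<Longrightarrow> B \<in> sets (borel_on (A i)) \<Longrightarrow>
      (\<integral>\<^sup>+ t\<in>E. emeasure (return (borel_on (A i)) (f i t)) B \<partial>lam i) =
      (\<integral>\<^sup>+ t\<in>E. emeasure (g i t) B \<partial>lam i)"
      using ude i by (simp add: univ_dist_equiv_def pure_as_mixed_def)
  qed (use i in auto)
qed

end
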